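(* Let $G$, $A$, $H$, $\beta$, $\sigma$, $\delta$ be as in the context, and let $(K,v)$ be an $\omega$-pseudo complete valued field of characteristic $0$ with residue characteristic $p$ whose value group is $A$, the smallest nonzero convex subgroup of $G$. If $f\in K(t^H,\beta)_\delta$ is nonzero, then $f$ has a multiplicative inverse in $K(t^H,\beta)_\delta$.
   Context: $G$ is an ordered abelian group, $A$ its smallest nonzero convex subgroup, $H=G/A$ with the induced order, $\rho:G\to H$ the projection; $\alpha:H\to G$ is a transversal ($\rho\alpha=\mathrm{id}_H$, $\alpha(0)=0$) and $\beta(h,h')=\alpha(h+h')-\alpha(h)-\alpha(h')\in A$. $\sigma:A\to K^\times$ is a cross-section (homomorphism with $v(\sigma(a))=a$). $\delta$ is an infinite cardinal and $K(t^H,\beta)_\delta$ is the set of formal sums $\sum_{h\in S}a_ht^h$ with $S\subseteq H$ well ordered, $|S|\le\delta$, $a_h\in K$, with coefficientwise addition and multiplication $\left(\sum a_ht^h\right)\left(\sum b_ht^h\right)=\sum_l\left(\sum_{h+h'=l}a_hb_{h'}\sigma(-\beta(h,h'))\right)t^l$. A sequence $(c_n)_{n<\omega}$ in a valued field is pseudo-Cauchy if for some $n_0$, $v(c_l-c_m)>v(c_m-c_n)$ whenever $n_0<n<m<l$; $c$ is a pseudo-limit if $v(c-c_n)=v(c_{n+1}-c_n)$ for all large $n$; $\omega$-pseudo complete means every pseudo-Cauchy sequence indexed by $\omega$ has a pseudo-limit. *)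

theory Defs
  imports Main "HOL-Library.Equipollence"
begin

definition add_subgroup :: "'g::ab_group_add set \<Rightarrow> bool" where
  "add_subgroup B \<longleftrightarrow> 0 \<in> B \<and> (\<forall>x\<in>B. \<forall>y\<in>B. x + y \<in> B) \<and> (\<forall>x\<in>B. - x \<in> B)"

definition convex_subgroup :: "'g::linordered_ab_group_add set \<Rightarrow> bool" where
  "convex_subgroup B \<longleftrightarrow> add_subgroup B \<and>
     (\<forall>x\<in>B. \<forall>y\<in>B. \<forall>z. x \<le> z \<and> z \<le> y \<longrightarrow> z \<in> B)"

definition smallest_nonzero_convex_subgroup :: "'g::linordered_ab_group_add set \<Rightarrow> bool" where
  "smallest_nonzero_convex_subgroup A \<longleftrightarrow> convex_subgroup A \<and> A \<noteq> {0} \<and>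
     (\<forall>B. convex_subgroup B \<and> B \<noteq> {0} \<longrightarrow> A \<subseteq> B)"

text \<open>H = G/A with the induced order, given as a surjective order-preserving
  homomorphism rho with kernel A (this determines H and its order up to
  isomorphism).\<close>
definition is_quotient_projection ::
  "'g::linordered_ab_group_add set \<Rightarrow> ('g \<Rightarrow> 'h::linordered_ab_group_add) \<Rightarrow> bool" where
  "is_quotient_projection A \<rho> \<longleftrightarrow>
     (\<forall>x y. \<rho> (x + y) = \<rho> x + \<rho> y) \<and> surj \<rho> \<and>
     (\<forall>x. \<rho> x = 0 \<longleftrightarrow> x \<in> A) \<and> (\<forall>x y. x \<le> y \<longrightarrow> \<rho> x \<le> \<rho> y)"

definition transversal :: "('g \<Rightarrow> 'h::zero) \<Rightarrow> ('h \<Rightarrow> 'g::zero) \<Rightarrow> bool" where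
  "transversal \<rho> \<alpha> \<longleftrightarrow> (\<forall>h. \<rho> (\<alpha> h) = h) \<and> \<alpha> 0 = 0"

definition cocycle :: "('h::ab_group_add \<Rightarrow> 'g::ab_group_add) \<Rightarrow> 'h \<Rightarrow> 'h \<Rightarrow> 'g" where
  "cocycle \<alpha> h h' = \<alpha> (h + h') - \<alpha> h - \<alpha> h'"

text \<open>A valuation on K with value group A: v is only meaningful on nonzero
  elements; v 0 is the formal value infinity (handled explicitly below).\<close>
definition valuation :: "('k::field \<Rightarrow> 'g::linordered_ab_group_add) \<Rightarrow> 'g set \<Rightarrow> bool" where
  "valuation v A \<longleftrightarrow>
     (\<forall>x y. x \<noteq> 0 \<and> y \<noteq> 0 \<longrightarrow> v (x * y) = v x + v y) \<and>
     (\<forall>x y. x \<noteq> 0 \<and> y \<noteq> 0 \<and> x + y \<noteq> 0 \<longrightarrow> min (v x) (v y) \<le> v (x + y)) \<and>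
     v ` {x. x \<noteq> 0} = A"

definition val_gt :: "('k::field \<Rightarrow> 'g::linorder) \<Rightarrow> 'k \<Rightarrow> 'k \<Rightarrow> bool" where
  "val_gt v a b \<longleftrightarrow> (a = 0 \<and> b \<noteq> 0) \<or> (a \<noteq> 0 \<and> b \<noteq> 0 \<and> v b < v a)"

definition val_eq :: "('k::field \<Rightarrow> 'g) \<Rightarrow> 'k \<Rightarrow> 'k \<Rightarrow> bool" where
  "val_eq v a b \<longleftrightarrow> (a = 0 \<and> b = 0) \<or> (a \<noteq> 0 \<and> b \<noteq> 0 \<and> v a = v b)"

definition pseudo_cauchy :: "('k::field \<Rightarrow> 'g::linorder) \<Rightarrow> (nat \<Rightarrow> 'k) \<Rightarrow> bool" where
  "pseudo_cauchy v c \<longleftrightarrow> (\<exists>n0. \<forall>n m l. n0 < n \<and> n < m \<and> m < l \<longrightarrow>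
      val_gt v (c l - c m) (c m - c n))"

definition pseudo_limit :: "('k::field \<Rightarrow> 'g) \<Rightarrow> (nat \<Rightarrow> 'k) \<Rightarrow> 'k \<Rightarrow> bool" where
  "pseudo_limit v c x \<longleftrightarrow> (\<exists>N. \<forall>n\<ge>N. val_eq v (x - c n) (c (Suc n) - c n))"

definition omega_pseudo_complete :: "('k::field \<Rightarrow> 'g::linorder) \<Rightarrow> bool" where
  "omega_pseudo_complete v \<longleftrightarrow> (\<forall>c. pseudo_cauchy v c \<longrightarrow> (\<exists>x. pseudo_limit v c x))"

definition cross_section :: "('k::field \<Rightarrow> 'g::ab_group_add) \<Rightarrow> 'g set \<Rightarrow> ('g \<Rightarrow> 'k) \<Rightarrow> bool" where
  "cross_section v A \<sigma> \<longleftrightarrow> (\<forall>a\<in>A. \<sigma> a \<noteq> 0 \<and> v (\<sigma> a) = a) \<and>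
     (\<forall>a\<in>A. \<forall>b\<in>A. \<sigma> (a + b) = \<sigma> a * \<sigma> b)"

text \<open>A formal sum is represented by its coefficient function.\<close>
definition supp :: "('h \<Rightarrow> 'k::zero) \<Rightarrow> 'h set" where
  "supp f = {h. f h \<noteq> 0}"

definition well_ordered_set :: "'h::linorder set \<Rightarrow> bool" where
  "well_ordered_set S \<longleftrightarrow> (\<forall>T. T \<subseteq> S \<and> T \<noteq> {} \<longrightarrow> (\<exists>m\<in>T. \<forall>x\<in>T. m \<le> x))"

text \<open>Elements of K(t^H,beta)_delta; the cardinal delta is represented by a set D
  of cardinality delta.\<close>
definition hahn_carrier :: "'d set \<Rightarrow> ('h::linorder \<Rightarrow> 'k::zero) set" where
  "hahn_carrier D = {f. well_ordered_set (supp f) \<and> supp f \<lesssim> D}"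

definition hahn_one :: "'h::zero \<Rightarrow> 'k::{zero,one}" where
  "hahn_one = (\<lambda>h. if h = 0 then 1 else 0)"

definition hahn_mult ::
  "('g \<Rightarrow> 'k::field) \<Rightarrow> ('h::ab_group_add \<Rightarrow> 'h \<Rightarrow> 'g::ab_group_add) \<Rightarrow>
   ('h \<Rightarrow> 'k) \<Rightarrow> ('h \<Rightarrow> 'k) \<Rightarrow> 'h \<Rightarrow> 'k" where
  "hahn_mult \<sigma> \<beta> f g l =
     (\<Sum>(h, h') \<in> {(h, h'). h \<in> supp f \<and> h' \<in> supp g \<and> h + h' = l}.
        f h * g h' * \<sigma> (- \<beta> h h'))"

end

theory Submission
  imports Defs Complex_Main
begin

(* Let h0 be the least exponent of f. Comparing coefficients of t^(x + h0) in f g = 1 gives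
     f(h0) g(x) sigma(-beta(h0, x)) + (terms with g at exponents below x) = [x + h0 = 0],
   a triangular system that well-founded recursion solves on
     M = -h0 + (the additive monoid generated by supp f - h0).
   By Neumann's lemma M is well ordered, and it has at most delta elements, so the solution g
   lies in K(t^H, beta)_delta. Since beta is symmetric, g f = f g. *)

unbundle cardinal_syntax

lemma well_ordered_set_iff_wf:
  fixes S :: "'a::linorder set"
  shows "well_ordered_set S \<longleftrightarrow> wf {(y, x). y \<in> S \<and> x \<in> S \<and> y < x}"
proof
  assume wo: "well_ordered_set S"
  show "wf {(y, x). y \<in> S \<and> x \<in> S \<and> y < x}"
  proof (rule wfI_min)
    fix x :: 'a and Q assume "x \<in> Q"
    show "\<exists>z\<in>Q. \<forall>y. (y, z) \<in> {(y, x). y \<in> S \<and> x \<in> S \<and> y < x} \<longrightarrow> y \<notin> Q"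
    proof (cases "Q \<inter> S = {}")
      case True
      then show ?thesis using \<open>x \<in> Q\<close> by blast
    next
      case False
      then obtain m where "m \<in> Q \<inter> S" "\<forall>y\<in>Q \<inter> S. m \<le> y"
        using wo unfolding well_ordered_set_def by (meson inf_le2)
      then show ?thesis by (auto simp: not_less[symmetric])
    qed
  qed
next
  assume wf: "wf {(y, x). y \<in> S \<and> x \<in> S \<and> y < x}"
  show "well_ordered_set S"
    unfolding well_ordered_set_def
  proof (intro allI impI)
    fix T assume "T \<subseteq> S \<and> T \<noteq> {}"
    then obtain m where "m \<in> T" "\<forall>y. y \<in> S \<and> m \<in> S \<and> y < m \<longrightarrow> y \<notin> T"
      using wfE_min[OF wf] by auto
    then show "\<exists>m\<in>T. \<forall>x\<in>T. m \<le> x"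
      using \<open>T \<subseteq> S \<and> T \<noteq> {}\<close> by (meson not_le subsetD)
  qed
qed

lemma well_ordered_set_iff_no_decreasing_seq:
  "well_ordered_set S \<longleftrightarrow> \<not> (\<exists>s. \<forall>i. s i \<in> S \<and> s (Suc i) < s i)"
proof -
  have "(\<forall>i. (s (Suc i), s i) \<in> {(y, x). y \<in> S \<and> x \<in> S \<and> y < x}) \<longleftrightarrow>
      (\<forall>i. s i \<in> S \<and> s (Suc i) < s i)" for s
    by blast
  then show ?thesis by (simp add: well_ordered_set_iff_wf wf_iff_no_infinite_down_chain)
qed

lemma well_ordered_set_subset: "well_ordered_set S \<Longrightarrow> T \<subseteq> S \<Longrightarrow> well_ordered_set T"
  unfolding well_ordered_set_def by blast

lemma well_ordered_set_image_strict_mono: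
  fixes f :: "'a::linorder \<Rightarrow> 'b::linorder"
  assumes wo: "well_ordered_set S" and f: "strict_mono f"
  shows "well_ordered_set (f ` S)"
  unfolding well_ordered_set_def
proof (intro allI impI)
  fix T assume T: "T \<subseteq> f ` S \<and> T \<noteq> {}"
  then have "S \<inter> f -` T \<subseteq> S" "S \<inter> f -` T \<noteq> {}" by auto
  then obtain m where m: "m \<in> S \<inter> f -` T" "\<forall>x\<in>S \<inter> f -` T. m \<le> x"
    using wo unfolding well_ordered_set_def by meson
  have "f m \<le> y" if "y \<in> T" for y
  proof -
    obtain x where "x \<in> S" "y = f x" using T \<open>y \<in> T\<close> by blast
    then show ?thesis using m(2) \<open>y \<in> T\<close> f by (simp add: strict_mono_less_eq)
  qed
  then show "\<exists>m\<in>T. \<forall>x\<in>T. m \<le> x" using m(1) by blast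
qed

lemma well_ordered_set_translate:
  fixes S :: "'h::linordered_ab_group_add set"
  shows "well_ordered_set S \<Longrightarrow> well_ordered_set ((\<lambda>x. x - c) ` S)"
  by (rule well_ordered_set_image_strict_mono) (auto intro: strict_monoI)

lemma well_ordered_set_incseq_subseq:
  fixes a :: "nat \<Rightarrow> 'a::linorder"
  assumes wo: "well_ordered_set S" and a: "\<And>i. a i \<in> S"
  obtains \<phi> where "strict_mono \<phi>" and "incseq (a \<circ> \<phi>)"
proof -
  obtain \<psi> where \<psi>: "strict_mono \<psi>" "monoseq (a \<circ> \<psi>)"
    using seq_monosub[of a] unfolding comp_def by blast
  show thesis
  proof (cases "incseq (a \<circ> \<psi>)")
    case True
    then show thesis using \<psi>(1) that by blast
  next
    case False
    then have dec: "decseq (a \<circ> \<psi>)" using \<psi>(2) by (simp add: monoseq_iff)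
    have "range (a \<circ> \<psi>) \<subseteq> S" "range (a \<circ> \<psi>) \<noteq> {}" using a by auto
    then obtain y where "y \<in> range (a \<circ> \<psi>)" "\<forall>x \<in> range (a \<circ> \<psi>). y \<le> x"
      using wo unfolding well_ordered_set_def by blast
    then obtain k where k: "\<And>i. a (\<psi> k) \<le> a (\<psi> i)" by auto
    have "a (\<psi> (i + k)) = a (\<psi> k)" for i
      using decseqD[OF dec, of k "i + k"] k[of "i + k"] by (simp add: antisym)
    then have "incseq (a \<circ> (\<lambda>i. \<psi> (i + k)))" by (simp add: incseq_def)
    moreover have "strict_mono (\<lambda>i. \<psi> (i + k))"
      using \<psi>(1) by (simp add: strict_mono_def)
    ultimately show thesis using that by blast
  qed
qed

lemma well_ordered_set_antidiagonal_finite: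
  fixes S T :: "'h::linordered_ab_group_add set"
  assumes woS: "well_ordered_set S" and woT: "well_ordered_set T"
  shows "finite {s \<in> S. l - s \<in> T}"
proof (rule ccontr)
  assume "infinite {s \<in> S. l - s \<in> T}"
  then obtain u :: "nat \<Rightarrow> 'h" where u: "inj u" "range u \<subseteq> {s \<in> S. l - s \<in> T}"
    using infinite_countable_subset by blast
  then obtain \<phi> where \<phi>: "strict_mono \<phi>" "incseq (u \<circ> \<phi>)"
    using well_ordered_set_incseq_subseq[OF woS, of u] by blast
  have "u (\<phi> i) < u (\<phi> (Suc i))" for i
  proof -
    have "u (\<phi> i) \<noteq> u (\<phi> (Suc i))"
      using u(1) strict_mono_less[OF \<phi>(1), of i "Suc i"] by (auto dest: injD)
    moreover have "u (\<phi> i) \<le> u (\<phi> (Suc i))" using incseq_SucD[OF \<phi>(2)] by simp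
    ultimately show ?thesis by simp
  qed
  then have "\<forall>i. l - u (\<phi> i) \<in> T \<and> l - u (\<phi> (Suc i)) < l - u (\<phi> i)"
    using u(2) by auto
  then show False
    using woT unfolding well_ordered_set_iff_no_decreasing_seq
    by (blast intro: exI[of _ "\<lambda>i. l - u (\<phi> i)"])
qed

(* Nash-Williams' minimal bad sequence construction. *)
lemma minimal_descending_chain:
  fixes Q :: "'a \<Rightarrow> 'a \<Rightarrow> bool" and rank :: "'a \<Rightarrow> nat"
  assumes "\<forall>i. Q (s0 (Suc i)) (s0 i)"
  obtains m where "\<forall>i. Q (m (Suc i)) (m i)"
    and "\<And>s n. \<forall>i. Q (s (Suc i)) (s i) \<Longrightarrow> \<forall>i<n. s i = m i \<Longrightarrow>
      rank (m n) \<le> rank (s n)"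
proof -
  define chain where "chain s \<longleftrightarrow> (\<forall>i. Q (s (Suc i)) (s i))" for s
  define extend where
    "extend n p = arg_min (\<lambda>s. rank (s n)) (\<lambda>s. chain s \<and> (\<forall>i<n. s i = p i))" for n p
  have extend: "chain (extend n p) \<and> (\<forall>i<n. extend n p i = p i) \<and> rank (extend n p n) \<le> rank (s n)"
    if "chain s" "\<forall>i<n. s i = p i" for s n p
    using arg_min_nat_lemma[of "\<lambda>s. chain s \<and> (\<forall>i<n. s i = p i)" s "\<lambda>s. rank (s n)"] that
    unfolding extend_def by blast
  define F where "F = rec_nat (extend 0 s0) (\<lambda>n. extend (Suc n))"
  have F_0: "F 0 = extend 0 s0" and F_Suc: "F (Suc n) = extend (Suc n) (F n)" for n
    by (simp_all add: F_def)
  have F_chain: "chain (F n)" for n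
  proof (induction n)
    case 0
    show ?case using extend[of s0 0 s0] assms by (simp add: F_0 chain_def)
  next
    case (Suc n)
    then show ?case using extend[of "F n" "Suc n" "F n"] by (simp add: F_Suc)
  qed
  have F_prefix: "F (Suc n) i = F n i" if "i \<le> n" for n i
    using extend[of "F n" "Suc n" "F n"] F_chain that by (simp add: F_Suc)
  have F_diag: "F n i = F i i" if "i \<le> n" for n i
    using that
  proof (induction n)
    case (Suc n)
    then show ?case by (cases "i = Suc n") (simp_all add: F_prefix)
  qed simp
  show thesis
  proof (rule that[of "\<lambda>i. F i i"])
    show "\<forall>i. Q (F (Suc i) (Suc i)) (F i i)"
    proof
      fix i
      have "Q (F (Suc i) (Suc i)) (F (Suc i) i)" using F_chain[of "Suc i"] unfolding chain_def by blast
      then show "Q (F (Suc i) (Suc i)) (F i i)" using F_prefix[of i i] by simp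
    qed
  next
    fix s n assume s: "\<forall>i. Q (s (Suc i)) (s i)" and prefix: "\<forall>i<n. s i = F i i"
    show "rank (F n n) \<le> rank (s n)"
    proof (cases n)
      case 0
      then show ?thesis using extend[of s 0 s0] s by (simp add: F_0 chain_def)
    next
      case (Suc k)
      have "s i = F k i" if "i < n" for i
        using prefix that F_diag[of i k] Suc by simp
      then show ?thesis using extend[of s n "F k"] s Suc by (simp add: F_Suc chain_def)
    qed
  qed
qed

primrec nfold_sums :: "'h::monoid_add set \<Rightarrow> nat \<Rightarrow> 'h set" where
  "nfold_sums P 0 = {0}"
| "nfold_sums P (Suc n) = {a + b | a b. a \<in> P \<and> b \<in> nfold_sums P n}"

definition sums_closure :: "'h::monoid_add set \<Rightarrow> 'h set" where
  "sums_closure P = (\<Union>n. nfold_sums P n)"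

lemma sums_closure_nonneg:
  fixes P :: "'h::linordered_ab_group_add set"
  assumes "\<And>p. p \<in> P \<Longrightarrow> 0 \<le> p" and "x \<in> sums_closure P"
  shows "0 \<le> x"
proof -
  have "0 \<le> x" if "x \<in> nfold_sums P n" for n x
    using that by (induction n arbitrary: x) (auto intro: add_nonneg_nonneg assms(1))
  then show ?thesis using assms(2) unfolding sums_closure_def by blast
qed

definition sums_length :: "'h::monoid_add set \<Rightarrow> 'h \<Rightarrow> nat" where
  "sums_length P x = (LEAST n. x \<in> nfold_sums P n)"

lemma sums_closure_decompose:
  assumes "x \<in> sums_closure P" and "x \<noteq> 0"
  obtains a t where "a \<in> P" and "t \<in> sums_closure P" and "x = a + t"
    and "sums_length P t < sums_length P x"
proof -
  obtain n where "x \<in> nfold_sums P n" using assms(1) unfolding sums_closure_def by blast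
  then have "x \<in> nfold_sums P (sums_length P x)" unfolding sums_length_def by (rule LeastI)
  moreover obtain k where k: "sums_length P x = Suc k"
    using calculation assms(2) by (cases "sums_length P x") auto
  ultimately obtain a t where "a \<in> P" "t \<in> nfold_sums P k" "x = a + t" by auto
  moreover have "sums_length P t \<le> k"
    unfolding sums_length_def using \<open>t \<in> nfold_sums P k\<close> by (rule Least_le)
  moreover have "t \<in> sums_closure P"
    using \<open>t \<in> nfold_sums P k\<close> unfolding sums_closure_def by blast
  ultimately show thesis using k that by simp
qed

lemma splice_tails_decreasing:
  fixes m a t :: "nat \<Rightarrow> 'h::linordered_ab_group_add"
  assumes m: "\<And>i. m (Suc i) < m i" and mt: "\<And>i. m i = a i + t i"
    and a: "\<And>i. 0 \<le> a i" and \<phi>: "strict_mono \<phi>" "incseq (a \<circ> \<phi>)"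
    and s: "\<And>i. s i = (if i < \<phi> 0 then m i else t (\<phi> (i - \<phi> 0)))"
  shows "s (Suc i) < s i"
proof -
  consider "Suc i < \<phi> 0" | "Suc i = \<phi> 0" | "\<phi> 0 \<le> i" by linarith
  then show ?thesis
  proof cases
    case 1
    then show ?thesis using m by (simp add: s)
  next
    case 2
    have "t (\<phi> 0) \<le> m (\<phi> 0)" using mt[of "\<phi> 0"] a[of "\<phi> 0"] by simp
    also have "m (\<phi> 0) < m i" using m[of i] by (simp add: 2[symmetric])
    finally show ?thesis using 2 by (simp add: s)
  next
    case 3
    define k where "k = i - \<phi> 0"
    have "m (\<phi> (Suc k)) < m (\<phi> k)"
      using lift_Suc_mono_less[of "\<lambda>i. - m i"] m \<phi>(1) unfolding strict_mono_def by simp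
    moreover have "a (\<phi> k) \<le> a (\<phi> (Suc k))" using incseq_SucD[OF \<phi>(2), of k] by simp
    ultimately have "t (\<phi> (Suc k)) < t (\<phi> k)"
      using mt[of "\<phi> k"] mt[of "\<phi> (Suc k)"] by (metis add_mono not_less)
    moreover have "s i = t (\<phi> k)" "s (Suc i) = t (\<phi> (Suc k))"
      using 3 by (simp_all add: s k_def Suc_diff_le)
    ultimately show ?thesis by simp
  qed
qed

lemma well_ordered_set_sums_closure:
  fixes P :: "'h::linordered_ab_group_add set"
  assumes wo: "well_ordered_set P" and nonneg: "\<And>p. p \<in> P \<Longrightarrow> 0 \<le> p"
  shows "well_ordered_set (sums_closure P)"
  unfolding well_ordered_set_iff_no_decreasing_seq
proof
  define N where "N = sums_closure P"
  define Q where "Q y x \<longleftrightarrow> x \<in> N \<and> y \<in> N \<and> y < x" for y x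
  assume "\<exists>s. \<forall>i. s i \<in> sums_closure P \<and> s (Suc i) < s i"
  then have "\<exists>s. \<forall>i. Q (s (Suc i)) (s i)" unfolding Q_def N_def by blast
  then obtain m where m: "\<forall>i. Q (m (Suc i)) (m i)"
    and minimal: "\<And>s n. \<forall>i. Q (s (Suc i)) (s i) \<Longrightarrow> \<forall>i<n. s i = m i \<Longrightarrow>
      sums_length P (m n) \<le> sums_length P (s n)"
    using minimal_descending_chain[where rank = "sums_length P"] by blast
  have m_in: "m i \<in> N" and m_dec: "m (Suc i) < m i" for i
    using m unfolding Q_def by blast+
  have "m i \<noteq> 0" for i
    using m_in[of "Suc i"] m_dec[of i] sums_closure_nonneg[OF nonneg] unfolding N_def
    by (metis not_less)
  then have "\<forall>i. \<exists>a t. a \<in> P \<and> t \<in> N \<and> m i = a + t \<and>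
      sums_length P t < sums_length P (m i)"
    using sums_closure_decompose m_in unfolding N_def by metis
  then obtain a t where at: "\<And>i. a i \<in> P \<and> t i \<in> N \<and> m i = a i + t i \<and>
      sums_length P (t i) < sums_length P (m i)"
    by metis
  obtain \<phi> where \<phi>: "strict_mono \<phi>" "incseq (a \<circ> \<phi>)"
    using well_ordered_set_incseq_subseq[OF wo, of a] at by blast
  txt \<open>Replacing the tail of \<open>m\<close> from \<open>\<phi> 0\<close> on by the shorter sums \<open>t (\<phi> i)\<close> keeps the
    chain descending, contradicting the minimality of \<open>m\<close> at \<open>\<phi> 0\<close>.\<close>
  define s where "s i = (if i < \<phi> 0 then m i else t (\<phi> (i - \<phi> 0)))" for i
  have "s (Suc i) < s i" for i
    by (rule splice_tails_decreasing[OF m_dec _ _ \<phi> s_def]) (use at nonneg in auto)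
  moreover have "s i \<in> N" for i using m_in at by (simp add: s_def)
  ultimately have "sums_length P (m (\<phi> 0)) \<le> sums_length P (t (\<phi> 0))"
    using minimal[of s "\<phi> 0"] unfolding Q_def by (simp add: s_def)
  moreover have "sums_length P (t (\<phi> 0)) < sums_length P (m (\<phi> 0))" using at by blast
  ultimately show False by simp
qed

lemma lepoll_iff_card_of_ordLeq: "A \<lesssim> B \<longleftrightarrow> |A| \<le>o |B|"
  unfolding lepoll_def card_of_ordLeq[symmetric] by blast

lemma sums_closure_lepoll:
  assumes PD: "P \<lesssim> D" and D: "infinite D"
  shows "sums_closure P \<lesssim> D"
proof -
  have "nfold_sums P n \<lesssim> D" for n
  proof (induction n)
    case 0
    then show ?case using D by (simp add: finite_lepoll_infinite)
  next
    case (Suc n)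
    have "nfold_sums P (Suc n) = (\<lambda>(a, b). a + b) ` (P \<times> nfold_sums P n)" by auto
    then have "nfold_sums P (Suc n) \<lesssim> P \<times> nfold_sums P n" by (simp add: image_lepoll)
    moreover have "|P \<times> nfold_sums P n| \<le>o |D|"
      using card_of_Times_ordLeq_infinite_Field[of "|D|" P "nfold_sums P n"] D PD Suc
      by (simp add: lepoll_iff_card_of_ordLeq Field_card_of card_of_card_order_on)
    ultimately show ?case by (meson lepoll_iff_card_of_ordLeq lepoll_trans)
  qed
  then have "|\<Union>n. nfold_sums P n| \<le>o |D|"
    using card_of_UNION_ordLeq_infinite[of D UNIV "nfold_sums P"] D
    by (simp add: lepoll_iff_card_of_ordLeq infinite_iff_card_of_nat[symmetric])
  then show ?thesis by (simp add: sums_closure_def lepoll_iff_card_of_ordLeq)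
qed

lemma wf_triangular_system_solvable:
  fixes c b :: "'a \<Rightarrow> 'k::field" and \<Phi> :: "('a \<Rightarrow> 'k) \<Rightarrow> 'a \<Rightarrow> 'k"
  assumes wf: "wf R" and c: "\<And>x. x \<in> M \<Longrightarrow> c x \<noteq> 0"
    and \<Phi>: "\<And>g g' x. x \<in> M \<Longrightarrow> (\<And>y. (y, x) \<in> R \<Longrightarrow> g y = g' y) \<Longrightarrow>
      \<Phi> g x = \<Phi> g' x"
  shows "\<exists>g. (\<forall>x \<in> M. c x * g x + \<Phi> g x = b x) \<and> (\<forall>x. x \<notin> M \<longrightarrow> g x = 0)"
proof -
  define F where "F g x = (if x \<in> M then (b x - \<Phi> g x) / c x else 0)" for g x
  have "adm_wf R F"
    unfolding adm_wf_def
  proof (intro allI impI)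
    fix g g' :: "'a \<Rightarrow> 'k" and x assume "\<forall>y. (y, x) \<in> R \<longrightarrow> g y = g' y"
    then have "x \<in> M \<Longrightarrow> \<Phi> g x = \<Phi> g' x" by (intro \<Phi>) blast+
    then show "F g x = F g' x" by (simp add: F_def)
  qed
  then have g: "wfrec R F x = F (wfrec R F) x" for x
    using wfrec_fixpoint[OF wf] by metis
  show ?thesis
  proof (intro exI conjI ballI allI impI)
    show "c x * wfrec R F x + \<Phi> (wfrec R F) x = b x" if "x \<in> M" for x
      using g[of x] c[OF that] that by (simp add: F_def field_simps)
    show "wfrec R F x = 0" if "x \<notin> M" for x
      using g[of x] that by (simp add: F_def)
  qed
qed

lemma hahn_mult_commute:
  assumes "\<And>h h'. \<beta> h h' = \<beta> h' h"
  shows "hahn_mult \<sigma> \<beta> f g = hahn_mult \<sigma> \<beta> g f"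
proof
  fix l
  show "hahn_mult \<sigma> \<beta> f g l = hahn_mult \<sigma> \<beta> g f l"
    unfolding hahn_mult_def
    by (rule sum.reindex_bij_witness[where i = prod.swap and j = prod.swap])
       (auto simp: assms add.commute mult_ac)
qed

lemma hahn_mult_eq_sum_fibre:
  fixes f g :: "'h::ab_group_add \<Rightarrow> 'k::field"
  assumes "supp g \<subseteq> M" and "finite {h \<in> supp f. l - h \<in> M}"
  shows "hahn_mult \<sigma> \<beta> f g l =
    (\<Sum>h \<in> {h \<in> supp f. l - h \<in> M}. f h * g (l - h) * \<sigma> (- \<beta> h (l - h)))"
proof -
  have "{(h, h'). h \<in> supp f \<and> h' \<in> supp g \<and> h + h' = l} =
      (\<lambda>h. (h, l - h)) ` {h \<in> supp f. l - h \<in> supp g}"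
    by (auto simp: algebra_simps image_iff)
  then have "hahn_mult \<sigma> \<beta> f g l =
      (\<Sum>h \<in> {h \<in> supp f. l - h \<in> supp g}. f h * g (l - h) * \<sigma> (- \<beta> h (l - h)))"
    unfolding hahn_mult_def by (simp add: sum.reindex inj_on_def)
  also have "\<dots> = (\<Sum>h \<in> {h \<in> supp f. l - h \<in> M}. f h * g (l - h) * \<sigma> (- \<beta> h (l - h)))"
    by (rule sum.mono_neutral_left[OF assms(2)]) (use assms(1) in \<open>auto simp: supp_def\<close>)
  finally show ?thesis .
qed

lemma inverse_support_exists:
  fixes S :: "'h::linordered_ab_group_add set" and D :: "'d set"
  assumes wo: "well_ordered_set S" and SD: "S \<lesssim> D" and D: "infinite D"
    and h0: "\<And>h. h \<in> S \<Longrightarrow> h0 \<le> h"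
  obtains M where "well_ordered_set M" and "M \<lesssim> D" and "- h0 \<in> M"
    and "\<And>x h. x \<in> M \<Longrightarrow> h \<in> S \<Longrightarrow> x + (h - h0) \<in> M"
proof
  define P where "P = (\<lambda>h. h - h0) ` S"
  define M where "M = (\<lambda>x. x - h0) ` sums_closure P"
  have "well_ordered_set (sums_closure P)"
    using well_ordered_set_sums_closure well_ordered_set_translate[OF wo] h0
    unfolding P_def by fastforce
  then show "well_ordered_set M"
    unfolding M_def by (rule well_ordered_set_translate)
  have "P \<lesssim> D" unfolding P_def using SD image_lepoll lepoll_trans by blast
  then show "M \<lesssim> D"
    unfolding M_def using sums_closure_lepoll[OF _ D] image_lepoll lepoll_trans by blast
  have "0 \<in> sums_closure P" unfolding sums_closure_def using nfold_sums.simps(1) by blast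
  then show "- h0 \<in> M" unfolding M_def by force
  fix x h assume "x \<in> M" "h \<in> S"
  then obtain n k where n: "n \<in> nfold_sums P k" and x: "x = n - h0"
    unfolding M_def sums_closure_def by blast
  have "(h - h0) + n \<in> nfold_sums P (Suc k)"
    using n \<open>h \<in> S\<close> unfolding P_def by auto
  moreover have "x + (h - h0) = ((h - h0) + n) - h0" using x by (simp add: algebra_simps)
  ultimately show "x + (h - h0) \<in> M"
    unfolding M_def sums_closure_def by blast
qed

lemma hahn_inverse_coefficients_exist:
  fixes f :: "'h::linordered_ab_group_add \<Rightarrow> 'k::field" and \<beta> :: "'h \<Rightarrow> 'h \<Rightarrow> 'g::ab_group_add"
  assumes \<sigma>\<beta>: "\<And>h h'. \<sigma> (- \<beta> h h') \<noteq> 0" and woS: "well_ordered_set (supp f)"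
    and h0: "h0 \<in> supp f" "\<And>h. h \<in> supp f \<Longrightarrow> h0 \<le> h" and woM: "well_ordered_set M"
  shows "\<exists>g. supp g \<subseteq> M \<and> (\<forall>x \<in> M.
    (\<Sum>h \<in> {h \<in> supp f. x + h0 - h \<in> M}. f h * g (x + h0 - h) * \<sigma> (- \<beta> h (x + h0 - h))) =
      hahn_one (x + h0))"
proof -
  define \<Phi> where "\<Phi> g x = (\<Sum>h \<in> {h \<in> supp f. h0 < h \<and> x + h0 - h \<in> M}.
      f h * g (x + h0 - h) * \<sigma> (- \<beta> h (x + h0 - h)))" for g x
  have "wf {(y, x). y \<in> M \<and> x \<in> M \<and> y < x}"
    using woM by (simp add: well_ordered_set_iff_wf)
  moreover have "f h0 * \<sigma> (- \<beta> h0 x) \<noteq> 0" for x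
    using h0(1) \<sigma>\<beta> unfolding supp_def by simp
  moreover have "\<Phi> g x = \<Phi> g' x"
    if "x \<in> M" and "\<And>y. (y, x) \<in> {(y, x). y \<in> M \<and> x \<in> M \<and> y < x} \<Longrightarrow> g y = g' y"
    for g g' x
    unfolding \<Phi>_def using that by (intro sum.cong) (auto simp: algebra_simps)
  ultimately have "\<exists>g. (\<forall>x \<in> M. f h0 * \<sigma> (- \<beta> h0 x) * g x + \<Phi> g x = hahn_one (x + h0)) \<and>
      (\<forall>x. x \<notin> M \<longrightarrow> g x = 0)"
    by (rule wf_triangular_system_solvable)
  then obtain g
    where g_eq: "\<And>x. x \<in> M \<Longrightarrow> f h0 * \<sigma> (- \<beta> h0 x) * g x + \<Phi> g x = hahn_one (x + h0)"
      and g_out: "\<And>x. x \<notin> M \<Longrightarrow> g x = 0"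
    by blast
  have "(\<Sum>h \<in> {h \<in> supp f. x + h0 - h \<in> M}. f h * g (x + h0 - h) * \<sigma> (- \<beta> h (x + h0 - h))) =
      hahn_one (x + h0)" if "x \<in> M" for x
  proof -
    have "{h \<in> supp f. x + h0 - h \<in> M} = insert h0 {h \<in> supp f. h0 < h \<and> x + h0 - h \<in> M}"
      using that h0 by (auto simp: order_le_less)
    moreover have "finite {h \<in> supp f. h0 < h \<and> x + h0 - h \<in> M}"
      using well_ordered_set_antidiagonal_finite[OF woS woM, of "x + h0"]
      by (rule rev_finite_subset) blast
    ultimately show ?thesis using g_eq[OF that] by (simp add: \<Phi>_def ac_simps)
  qed
  moreover have "supp g \<subseteq> M" using g_out unfolding supp_def by blast
  ultimately show ?thesis by blast
qed

lemma hahn_mult_right_inverse: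
  fixes f :: "'h::linordered_ab_group_add \<Rightarrow> 'k::field"
    and \<beta> :: "'h \<Rightarrow> 'h \<Rightarrow> 'g::ab_group_add" and D :: "'d set"
  assumes \<sigma>\<beta>: "\<And>h h'. \<sigma> (- \<beta> h h') \<noteq> 0"
    and f: "f \<in> hahn_carrier D" "f \<noteq> (\<lambda>_. 0)" and D: "infinite D"
  shows "\<exists>g \<in> hahn_carrier D. hahn_mult \<sigma> \<beta> f g = hahn_one"
proof -
  define S where "S = supp f"
  have woS: "well_ordered_set S" and SD: "S \<lesssim> D"
    using f(1) unfolding hahn_carrier_def S_def by auto
  have "S \<noteq> {}" using f(2) unfolding S_def supp_def by auto
  then obtain h0 where h0: "h0 \<in> S" "\<And>h. h \<in> S \<Longrightarrow> h0 \<le> h"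
    using woS[unfolded well_ordered_set_def, rule_format, of S] by blast
  obtain M where woM: "well_ordered_set M" and MD: "M \<lesssim> D" and "- h0 \<in> M"
    and M_closed: "\<And>x h. x \<in> M \<Longrightarrow> h \<in> S \<Longrightarrow> x + (h - h0) \<in> M"
    using inverse_support_exists[OF woS SD D h0(2)] by blast
  obtain g where supp_g: "supp g \<subseteq> M" and g_eq: "\<And>x. x \<in> M \<Longrightarrow>
      (\<Sum>h \<in> {h \<in> S. x + h0 - h \<in> M}. f h * g (x + h0 - h) * \<sigma> (- \<beta> h (x + h0 - h))) =
        hahn_one (x + h0)"
    using hahn_inverse_coefficients_exist[where \<sigma> = \<sigma> and \<beta> = \<beta>,
        OF \<sigma>\<beta> woS[unfolded S_def] h0[unfolded S_def] woM]
    unfolding S_def by blast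
  have "hahn_mult \<sigma> \<beta> f g l = hahn_one l" for l
  proof -
    have "hahn_mult \<sigma> \<beta> f g l =
        (\<Sum>h \<in> {h \<in> S. l - h \<in> M}. f h * g (l - h) * \<sigma> (- \<beta> h (l - h)))"
      using hahn_mult_eq_sum_fibre[OF supp_g] well_ordered_set_antidiagonal_finite[OF woS woM]
      unfolding S_def by blast
    also have "\<dots> = hahn_one l"
    proof (cases "l - h0 \<in> M")
      case True
      then show ?thesis using g_eq[of "l - h0"] by simp
    next
      case False
      have "l - h \<notin> M" if "h \<in> S" for h
      proof
        assume "l - h \<in> M"
        moreover have "l - h + (h - h0) = l - h0" by (simp add: algebra_simps)
        ultimately show False using M_closed[of "l - h" h] that False by simp
      qed
      then have no_terms: "{h \<in> S. l - h \<in> M} = {}" by blast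
      have "l \<noteq> 0" using False \<open>- h0 \<in> M\<close> by auto
      then show ?thesis unfolding no_terms by (simp add: hahn_one_def)
    qed
    finally show ?thesis .
  qed
  moreover have "g \<in> hahn_carrier D"
    unfolding hahn_carrier_def
    using well_ordered_set_subset[OF woM supp_g] subset_imp_lepoll[OF supp_g] MD lepoll_trans by blast
  ultimately show ?thesis by blast
qed

lemma cocycle_commute: "cocycle \<alpha> h h' = cocycle \<alpha> h' h"
  unfolding cocycle_def by (simp add: add.commute algebra_simps)

lemma cocycle_mem_kernel:
  assumes "is_quotient_projection A \<rho>" and "transversal \<rho> \<alpha>"
  shows "cocycle \<alpha> h h' \<in> A"
proof -
  have "\<rho> (x - y) = \<rho> x - \<rho> y" for x y
    using assms(1) unfolding is_quotient_projection_def by (metis add_diff_cancel eq_diff_eq)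
  then have "\<rho> (cocycle \<alpha> h h') = 0"
    using assms(2) unfolding cocycle_def transversal_def by simp
  then show ?thesis using assms(1) unfolding is_quotient_projection_def by blast
qed

theorem proposition2p5:
  fixes A :: "'g::linordered_ab_group_add set"
    and \<rho> :: "'g \<Rightarrow> 'h::linordered_ab_group_add"
    and \<alpha> :: "'h \<Rightarrow> 'g"
    and v :: "'k::field_char_0 \<Rightarrow> 'g"
    and \<sigma> :: "'g \<Rightarrow> 'k"
    and D :: "'d set"
    and f :: "'h \<Rightarrow> 'k"
  assumes A: "smallest_nonzero_convex_subgroup A"
    and H: "is_quotient_projection A \<rho>"
    and alpha: "transversal \<rho> \<alpha>"
    and val: "valuation v A"
    and complete: "omega_pseudo_complete v"
    and sigma: "cross_section v A \<sigma>"
    and delta: "infinite D"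
    and f_in: "f \<in> hahn_carrier D"
    and f_nz: "f \<noteq> (\<lambda>_. 0)"
  shows "\<exists>g \<in> hahn_carrier D.
           hahn_mult \<sigma> (cocycle \<alpha>) f g = hahn_one \<and>
           hahn_mult \<sigma> (cocycle \<alpha>) g f = hahn_one"
proof -
  have "add_subgroup A"
    using A unfolding smallest_nonzero_convex_subgroup_def convex_subgroup_def by blast
  then have "\<sigma> (- cocycle \<alpha> h h') \<noteq> 0" for h h'
    using cocycle_mem_kernel[OF H alpha] sigma unfolding add_subgroup_def cross_section_def by blast
  then obtain g where "g \<in> hahn_carrier D" and fg: "hahn_mult \<sigma> (cocycle \<alpha>) f g = hahn_one"
    using hahn_mult_right_inverse f_in f_nz delta by blast
  moreover have "hahn_mult \<sigma> (cocycle \<alpha>) g f = hahn_one"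
    using fg hahn_mult_commute[of "cocycle \<alpha>"] cocycle_commute by metis
  ultimately show ?thesis by blast
qed

end
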